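(* Let $\Delta_1,\Delta_2$ be simplicial complexes on $[n]$ and let $A,A',B$ be nonempty subsets of $[n]$ such that $A\cap B=A'\cap B=\emptyset$ and neither $A$ nor $A'$ meets the vertex set of $\Delta_1\cup\Delta_2$. Then $$\tilde H_i\big((A*\Delta_1)\cup(B*\Delta_2);\mathbb{K}\big)\cong\tilde H_i\big((A'*\Delta_1)\cup(B*\Delta_2);\mathbb{K}\big)\quad\text{for all } i>0.$$
   Context: A simplicial complex on $[n]$ is a finite family of subsets of $[n]$ closed under taking subsets (singletons need not belong to it); its vertex set is the union of its faces. For a nonempty $A\subseteq[n]$ and a simplicial complex $\Delta$ on $[n]$, the cone $A*\Delta$ is the simplicial complex whose facets are the sets $A\cup F$ with $F$ a facet of $\Delta$. $\tilde H_i(\,\cdot\,;\mathbb{K})$ denotes reduced simplicial homology with coefficients in the field $\mathbb{K}$. *)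

theory Defs
  imports Main
begin

definition simplicial_complex :: "nat \<Rightarrow> nat set set \<Rightarrow> bool" where
  "simplicial_complex n \<Delta> \<longleftrightarrow> \<Delta> \<subseteq> Pow {1..n} \<and> (\<forall>F\<in>\<Delta>. \<forall>G. G \<subseteq> F \<longrightarrow> G \<in> \<Delta>)"

definition vertex_set :: "nat set set \<Rightarrow> nat set" where
  "vertex_set \<Delta> = \<Union>\<Delta>"

definition facets :: "nat set set \<Rightarrow> nat set set" where
  "facets \<Delta> = {F \<in> \<Delta>. \<forall>G\<in>\<Delta>. F \<subseteq> G \<longrightarrow> G = F}"

definition cone :: "nat set \<Rightarrow> nat set set \<Rightarrow> nat set set" where
  "cone A \<Delta> = {G. \<exists>F\<in>facets \<Delta>. G \<subseteq> A \<union> F}"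

text \<open>Simplicial chains with coefficients in a field: i-chains are (finitely supported)
  functions on the faces of cardinality i+1.  Faces are oriented by the natural order
  of their vertices.  The empty face sits in degree -1 (chains with i = 0 are mapped
  to the augmentation), so this is the augmented (reduced) chain complex.\<close>
definition chains :: "nat \<Rightarrow> nat set set \<Rightarrow> (nat set \<Rightarrow> 'k::field) set" where
  "chains i X = {c. \<forall>F. c F \<noteq> 0 \<longrightarrow> F \<in> X \<and> card F = i + 1}"

definition boundary :: "nat set set \<Rightarrow> (nat set \<Rightarrow> 'k::field) \<Rightarrow> (nat set \<Rightarrow> 'k)" where
  "boundary X c G = (\<Sum>v\<in>\<Union>X - G. (-1) ^ card {u\<in>G. u < v} * c (insert v G))"

definition cycles :: "nat \<Rightarrow> nat set set \<Rightarrow> (nat set \<Rightarrow> 'k::field) set" where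
  "cycles i X = {c \<in> chains i X. \<forall>G. boundary X c G = 0}"

definition boundaries :: "nat \<Rightarrow> nat set set \<Rightarrow> (nat set \<Rightarrow> 'k::field) set" where
  "boundaries i X = boundary X ` chains (Suc i) X"

text \<open>H~_i(X;K) \<cong> H~_i(Y;K) as K-vector spaces, where H~_i = cycles / boundaries:
  there is a K-linear map f on cycles inducing a well-defined bijection of the quotients.\<close>
definition reduced_homology_iso :: "'k::field itself \<Rightarrow> nat \<Rightarrow> nat set set \<Rightarrow> nat set set \<Rightarrow> bool" where
  "reduced_homology_iso K i X Y \<longleftrightarrow>
     (\<exists>f :: (nat set \<Rightarrow> 'k) \<Rightarrow> (nat set \<Rightarrow> 'k).
        (\<forall>c\<in>cycles i X. f c \<in> cycles i Y) \<and>
        (\<forall>c\<in>cycles i X. \<forall>d\<in>cycles i X. f (\<lambda>F. c F + d F) = (\<lambda>F. f c F + f d F)) \<and>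
        (\<forall>a. \<forall>c\<in>cycles i X. f (\<lambda>F. a * c F) = (\<lambda>F. a * f c F)) \<and>
        (\<forall>c\<in>cycles i X. f c \<in> boundaries i Y \<longleftrightarrow> c \<in> boundaries i X) \<and>
        (\<forall>d\<in>cycles i Y. \<exists>c\<in>cycles i X. (\<lambda>F. d F - f c F) \<in> boundaries i Y))"

end

theory Submission
  imports Defs "HOL-Library.Function_Algebras"
begin

text \<open>
  Write X(A) for (A * \<Delta>1) \<union> (B * \<Delta>2). Its faces missing A form the complex \<Delta>1 \<union> (B * \<Delta>2),
  which does not depend on A, and its faces meeting A lie in A * \<Delta>1. If c is a cycle of X(A) and
  z is the part of c on faces missing A, then \<partial>z = -\<partial>(c - z) on those faces, so \<partial>z is carried
  by \<Delta>1. Hence, for a vertex a' of A' and a'\<cdot>x the cone from apex a', the transfer z - a'\<cdot>\<partial>z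
  is a cycle of X(A'). The homotopy formula \<partial>(a\<cdot>x) + a\<cdot>\<partial>x = x shows that transfers map
  boundaries to boundaries and that, for a \<in> A, a cycle c differs from its transfer from A to A
  by the boundary of a\<cdot>(c - transfer). A transfer only sees z, so transferring from A to A'
  and back is the transfer from A to A; thus the two transfers are inverse to each other on homology.
\<close>

definition insert_sign :: "nat set \<Rightarrow> nat \<Rightarrow> 'k::comm_ring_1" where
  "insert_sign G v = (-1) ^ card {u\<in>G. u < v}"

text \<open>Summing over a fixed vertex universe U rather than over the vertices of a complex lets one
  boundary operator serve all the complexes X(A) at once.\<close>

definition bdry :: "nat set \<Rightarrow> (nat set \<Rightarrow> 'k::comm_ring_1) \<Rightarrow> nat set \<Rightarrow> 'k" where
  "bdry U c G = (\<Sum>v\<in>U - G. insert_sign G v * c (insert v G))"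

definition cone_chain :: "nat \<Rightarrow> (nat set \<Rightarrow> 'k::comm_ring_1) \<Rightarrow> nat set \<Rightarrow> 'k" where
  "cone_chain a c G = (if a \<in> G then insert_sign (G - {a}) a * c (G - {a}) else 0)"

definition avoid :: "nat set \<Rightarrow> (nat set \<Rightarrow> 'k::comm_ring_1) \<Rightarrow> nat set \<Rightarrow> 'k" where
  "avoid A c G = (if G \<inter> A = {} then c G else 0)"

definition transfer :: "nat set \<Rightarrow> nat \<Rightarrow> nat set \<Rightarrow> (nat set \<Rightarrow> 'k::comm_ring_1) \<Rightarrow> nat set \<Rightarrow> 'k" where
  "transfer U a A c = avoid A c - cone_chain a (bdry U (avoid A c))"

lemma insert_sign_square: "insert_sign G v * insert_sign G v = (1::'k::comm_ring_1)"
  by (simp add: insert_sign_def power_add[symmetric] mult_2[symmetric] power_mult)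

lemma insert_sign_insert:
  assumes "x \<notin> H"
  shows "(insert_sign (insert x H) v :: 'k::comm_ring_1) =
    (if x < v then - insert_sign H v else insert_sign H v)"
proof -
  have "finite {u\<in>H. u < v}"
    by (rule finite_subset[of _ "{..<v}"]) auto
  moreover have "{u\<in>insert x H. u < v} = (if x < v then insert x {u\<in>H. u < v} else {u\<in>H. u < v})"
    by auto
  ultimately show ?thesis
    using assms by (simp add: insert_sign_def)
qed

lemma bdry_add: "bdry U (c + d) = bdry U c + bdry U d"
  by (simp add: fun_eq_iff bdry_def sum.distrib distrib_left)

lemma bdry_diff: "bdry U (c - d) = bdry U c - bdry U d"
  by (simp add: fun_eq_iff bdry_def sum_subtractf right_diff_distrib)

lemma bdry_smult: "bdry U (\<lambda>G. x * c G) = (\<lambda>G. x * bdry U c G)"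
  by (simp add: fun_eq_iff bdry_def sum_distrib_left mult.left_commute)

lemma cone_chain_add: "cone_chain a (c + d) = cone_chain a c + cone_chain a d"
  by (simp add: fun_eq_iff cone_chain_def distrib_left)

lemma cone_chain_smult: "cone_chain a (\<lambda>G. x * c G) = (\<lambda>G. x * cone_chain a c G)"
  by (simp add: fun_eq_iff cone_chain_def mult.left_commute)

lemma avoid_add: "avoid A (c + d) = avoid A c + avoid A d"
  by (simp add: fun_eq_iff avoid_def)

lemma avoid_smult: "avoid A (\<lambda>G. x * c G) = (\<lambda>G. x * avoid A c G)"
  by (simp add: fun_eq_iff avoid_def)

lemma transfer_add: "transfer U a A (c + d) = transfer U a A c + transfer U a A d"
  by (simp add: transfer_def avoid_add bdry_add cone_chain_add)

lemma transfer_smult: "transfer U a A (\<lambda>G. x * c G) = (\<lambda>G. x * transfer U a A c G)"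
  by (simp add: fun_eq_iff transfer_def avoid_smult bdry_smult cone_chain_smult right_diff_distrib)

lemma bdry_bdry:
  assumes "finite U"
  shows "bdry U (bdry U c) = (0 :: nat set \<Rightarrow> 'k::comm_ring_1)"
proof
  fix G
  define t where "t v w = (insert_sign G v :: 'k) * insert_sign (insert v G) w * c (insert w (insert v G))" for v w
  define P where "P = Sigma (U - G) (\<lambda>v. U - G - {v})"
  define Less where "Less = {p\<in>P. fst p < snd p}"
  have "finite P"
    unfolding P_def using assms by auto
  have antisym: "t w v = - t v w" if "(v, w) \<in> Less" for v w
  proof -
    have "v \<notin> G" "w \<notin> G" "v < w"
      using that unfolding Less_def P_def by auto
    moreover have "insert v (insert w G) = insert w (insert v G)"
      by auto
    ultimately show ?thesis
      unfolding t_def by (auto simp: insert_sign_insert)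
  qed
  have swap: "{p\<in>P. snd p < fst p} = prod.swap ` Less"
    unfolding Less_def P_def by (auto simp: image_iff)
  have "bdry U (bdry U c) G = (\<Sum>v\<in>U - G. \<Sum>w\<in>U - G - {v}. t v w)"
    unfolding bdry_def t_def
    by (intro sum.cong refl) (auto simp: sum_distrib_left mult.assoc intro!: sum.cong)
  also have "\<dots> = (\<Sum>p\<in>P. t (fst p) (snd p))"
    unfolding P_def using assms by (subst sum.Sigma) (auto simp: split_def)
  also have "P = Less \<union> {p\<in>P. snd p < fst p}"
    unfolding Less_def P_def by auto
  also have "(\<Sum>p\<in>\<dots>. t (fst p) (snd p)) =
      (\<Sum>p\<in>Less. t (fst p) (snd p)) + (\<Sum>p\<in>Less. t (snd p) (fst p))"
    using \<open>finite P\<close> unfolding swap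
    by (subst sum.union_disjoint) (auto simp: Less_def sum.reindex inj_on_def)
  also have "(\<Sum>p\<in>Less. t (snd p) (fst p)) = - (\<Sum>p\<in>Less. t (fst p) (snd p))"
    by (auto simp: sum_negf[symmetric] antisym intro!: sum.cong)
  finally show "bdry U (bdry U c) G = 0 G"
    by simp
qed

lemma cone_chain_insert_apex:
  "a \<notin> H \<Longrightarrow> cone_chain a c (insert a H) = insert_sign H a * c H"
  by (simp add: cone_chain_def)

lemma bdry_cone_chain_off_apex:
  assumes "finite U" "a \<in> U" "a \<notin> G"
  shows "bdry U (cone_chain a c) G = (c G :: 'k::comm_ring_1)"
proof -
  have "bdry U (cone_chain a c) G =
      insert_sign G a * cone_chain a c (insert a G)
      + (\<Sum>v\<in>U - G - {a}. insert_sign G v * cone_chain a c (insert v G))"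
    unfolding bdry_def by (rule sum.remove) (use assms in auto)
  also have "(\<Sum>v\<in>U - G - {a}. insert_sign G v * cone_chain a c (insert v G)) = 0"
    using assms(3) by (intro sum.neutral) (auto simp: cone_chain_def)
  finally show ?thesis
    using assms(3) by (simp add: cone_chain_insert_apex mult.assoc[symmetric] insert_sign_square)
qed

lemma bdry_cone_chain_at_apex:
  assumes "finite U" "a \<in> U" "a \<notin> H"
  shows "bdry U (cone_chain a c) (insert a H) + cone_chain a (bdry U c) (insert a H) =
    (c (insert a H) :: 'k::comm_ring_1)"
proof -
  let ?S = "\<Sum>v\<in>U - insert a H. insert_sign H a * insert_sign H v * c (insert v H)"
  have "U - H = insert a (U - insert a H)"
    using assms(2,3) by blast
  then have "bdry U c H = (\<Sum>v\<in>insert a (U - insert a H). insert_sign H v * c (insert v H))"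
    unfolding bdry_def by (rule arg_cong)
  also have "\<dots> = insert_sign H a * c (insert a H)
      + (\<Sum>v\<in>U - insert a H. insert_sign H v * c (insert v H))"
    by (rule sum.insert) (use assms(1) in auto)
  finally have cone_bdry: "cone_chain a (bdry U c) (insert a H) = c (insert a H) + ?S"
    using assms(3) by (simp add: cone_chain_insert_apex distrib_left sum_distrib_left
        mult.assoc[symmetric] insert_sign_square)
  have "insert_sign (insert a H) v * cone_chain a c (insert v (insert a H)) =
      - (insert_sign H a * insert_sign H v * c (insert v H))" if "v \<in> U - insert a H" for v
  proof -
    have "insert v (insert a H) = insert a (insert v H)" "a \<notin> insert v H"
      using that assms(3) by auto
    moreover have "insert_sign (insert a H) v * insert_sign (insert v H) a =
        - (insert_sign H a * insert_sign H v :: 'k)"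
      using that assms(3) by (auto simp: insert_sign_insert)
    ultimately show ?thesis
      by (simp add: cone_chain_insert_apex mult.assoc[symmetric])
  qed
  then have "bdry U (cone_chain a c) (insert a H) = - ?S"
    unfolding bdry_def sum_negf[symmetric] by (rule sum.cong[OF refl])
  then show ?thesis
    using cone_bdry by simp
qed

lemma bdry_cone_chain:
  assumes "finite U" "a \<in> U"
  shows "bdry U (cone_chain a c) + cone_chain a (bdry U c) = (c :: nat set \<Rightarrow> 'k::comm_ring_1)"
proof
  fix G
  show "(bdry U (cone_chain a c) + cone_chain a (bdry U c)) G = c G"
  proof (cases "a \<in> G")
    case False
    then show ?thesis
      using bdry_cone_chain_off_apex[OF assms False] by (simp add: cone_chain_def)
  next
    case True
    then show ?thesis
      using bdry_cone_chain_at_apex[OF assms, of "G - {a}" c] by (simp add: insert_absorb)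
  qed
qed

lemma avoid_diff: "avoid A (c - d) = avoid A c - avoid A d"
  by (simp add: fun_eq_iff avoid_def)

lemma avoid_zero [simp]: "avoid A 0 = 0"
  by (simp add: fun_eq_iff avoid_def)

lemma cone_chain_zero [simp]: "cone_chain a 0 = 0"
  by (simp add: fun_eq_iff cone_chain_def)

lemma bdry_transfer:
  assumes "finite U" "a \<in> U"
  shows "bdry U (transfer U a A c) = (0 :: nat set \<Rightarrow> 'k::comm_ring_1)"
proof -
  have "bdry U (cone_chain a (bdry U (avoid A c))) = bdry U (avoid A (c :: nat set \<Rightarrow> 'k))"
    using bdry_cone_chain[OF assms, of "bdry U (avoid A c)"] by (simp add: bdry_bdry[OF assms(1)])
  then show ?thesis
    by (simp add: transfer_def bdry_diff)
qed

lemma bdry_avoid: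
  "bdry U (avoid A c) = avoid A (bdry U c) - avoid A (bdry U (c - avoid A c))"
proof
  fix G
  show "bdry U (avoid A c) G = (avoid A (bdry U c) - avoid A (bdry U (c - avoid A c))) G"
  proof (cases "G \<inter> A = {}")
    case True
    then show ?thesis
      using bdry_diff[of U c "avoid A c"] by (simp add: avoid_def fun_eq_iff)
  next
    case False
    then show ?thesis
      by (auto simp: avoid_def bdry_def intro!: sum.neutral)
  qed
qed

lemma avoid_cone_chain: "a \<in> A \<Longrightarrow> avoid A (cone_chain a c) = 0"
  by (auto simp: fun_eq_iff avoid_def cone_chain_def)

lemma bdry_nonzero: "bdry U c G \<noteq> 0 \<Longrightarrow> \<exists>v\<in>U - G. c (insert v G) \<noteq> 0"
  unfolding bdry_def by (metis (no_types, lifting) mult_zero_right sum.neutral)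

lemma cone_eq:
  assumes "simplicial_complex n D"
  shows "cone A D = {G. G - A \<in> D}"
proof (intro equalityI subsetI)
  fix G assume "G \<in> cone A D"
  then obtain F where "F \<in> D" "G - A \<subseteq> F"
    unfolding cone_def facets_def by auto
  then show "G \<in> {G. G - A \<in> D}"
    using assms unfolding simplicial_complex_def by auto
next
  fix G assume "G \<in> {G. G - A \<in> D}"
  moreover have "finite D"
    using assms unfolding simplicial_complex_def by (auto intro: finite_subset)
  ultimately obtain F where "F \<in> D" "G - A \<subseteq> F" "\<forall>F'\<in>D. F \<subseteq> F' \<longrightarrow> F = F'"
    using finite_has_maximal2[of D "G - A"] by auto
  then show "G \<in> cone A D"
    unfolding cone_def facets_def by blast
qed

text \<open>Here d is the number of vertices of the faces, not the dimension: chains i X is chain_on X (i + 1).\<close>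

definition chain_on :: "nat set set \<Rightarrow> nat \<Rightarrow> (nat set \<Rightarrow> 'k::zero) \<Rightarrow> bool" where
  "chain_on K d c \<longleftrightarrow> (\<forall>G. c G \<noteq> 0 \<longrightarrow> G \<in> K \<and> finite G \<and> card G = d)"

lemma chains_iff_chain_on: "c \<in> chains i X \<longleftrightarrow> chain_on X (Suc i) c"
  by (auto simp: chains_def chain_on_def card_ge_0_finite)

lemma chain_on_mono: "chain_on K d c \<Longrightarrow> K \<subseteq> L \<Longrightarrow> chain_on L d c"
  by (auto simp: chain_on_def)

lemma chain_on_add:
  "chain_on K d c \<Longrightarrow> chain_on K d e \<Longrightarrow> chain_on K d (c + e :: nat set \<Rightarrow> 'k::comm_ring_1)"
  unfolding chain_on_def by (metis add.right_neutral plus_fun_apply)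

lemma chain_on_diff:
  "chain_on K d c \<Longrightarrow> chain_on K d e \<Longrightarrow> chain_on K d (c - e :: nat set \<Rightarrow> 'k::comm_ring_1)"
  unfolding chain_on_def by (metis diff_self minus_apply)

lemma chain_on_uminus: "chain_on K d c \<Longrightarrow> chain_on K d (- c :: nat set \<Rightarrow> 'k::comm_ring_1)"
  by (auto simp: chain_on_def)

lemma chain_on_avoid: "chain_on K d c \<Longrightarrow> chain_on {G\<in>K. G \<inter> A = {}} d (avoid A c)"
  by (auto simp: chain_on_def avoid_def)

lemma chain_on_diff_avoid: "chain_on K d c \<Longrightarrow> chain_on {G\<in>K. G \<inter> A \<noteq> {}} d (c - avoid A c)"
  by (auto simp: chain_on_def avoid_def)

lemma avoid_chain_on_disjoint:
  "chain_on K d c \<Longrightarrow> (\<And>G. G \<in> K \<Longrightarrow> G \<inter> A = {}) \<Longrightarrow> avoid A c = c"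
  by (auto simp: fun_eq_iff avoid_def chain_on_def)

lemma chain_on_cone_chain:
  assumes "simplicial_complex n D" "a \<in> A" "chain_on (cone A D) d c"
  shows "chain_on (cone A D) (Suc d) (cone_chain a c)"
  unfolding chain_on_def
proof (intro allI impI)
  fix G assume "cone_chain a c G \<noteq> 0"
  then have "a \<in> G" "c (G - {a}) \<noteq> 0"
    by (auto simp: cone_chain_def split: if_splits)
  then have "G - {a} - A \<in> D" "finite (G - {a})" "card (G - {a}) = d"
    using assms(3) by (auto simp: chain_on_def cone_eq[OF assms(1)])
  moreover have "G - {a} - A = G - A"
    using assms(2) by auto
  moreover have "finite G"
    using \<open>finite (G - {a})\<close> by simp
  ultimately show "G \<in> cone A D \<and> finite G \<and> card G = Suc d"
    using \<open>a \<in> G\<close> card_Suc_Diff1[of G a] by (simp add: cone_eq[OF assms(1)])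
qed

lemma chain_on_avoid_bdry:
  assumes D: "simplicial_complex n D"
    and e: "chain_on (cone A D) (Suc d) e"
  shows "chain_on D d (avoid A (bdry U e))"
  unfolding chain_on_def
proof (intro allI impI)
  fix G assume nonzero: "avoid A (bdry U e) G \<noteq> 0"
  then have "G \<inter> A = {}" "bdry U e G \<noteq> 0"
    by (simp_all add: avoid_def split: if_splits)
  moreover obtain v where "v \<notin> G" "e (insert v G) \<noteq> 0"
    using bdry_nonzero[OF \<open>bdry U e G \<noteq> 0\<close>] by blast
  then have "insert v G - A \<in> D" "finite (insert v G)" "card (insert v G) = Suc d"
    using e by (auto simp: chain_on_def cone_eq[OF D])
  moreover have "G \<subseteq> insert v G - A"
    using \<open>G \<inter> A = {}\<close> by blast
  ultimately show "G \<in> D \<and> finite G \<and> card G = d"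
    using D \<open>v \<notin> G\<close> unfolding simplicial_complex_def by auto
qed

lemma boundary_eq_bdry:
  assumes "chain_on X d c" "X \<subseteq> Pow U" "finite U"
  shows "boundary X c = bdry U c"
proof
  fix G
  have "(\<Sum>v\<in>\<Union>X - G. insert_sign G v * c (insert v G)) = (\<Sum>v\<in>U - G. insert_sign G v * c (insert v G))"
    using assms by (intro sum.mono_neutral_left) (auto simp: chain_on_def)
  then show "boundary X c G = bdry U c G"
    by (simp add: boundary_def bdry_def insert_sign_def)
qed

lemma cycles_eq:
  assumes "X \<subseteq> Pow U" "finite U"
  shows "cycles i X = {c. chain_on X (Suc i) c \<and> bdry U c = 0}"
proof -
  have "(\<forall>G. boundary X c G = 0) \<longleftrightarrow> bdry U c = 0" if "chain_on X (Suc i) c" for c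
    using boundary_eq_bdry[OF that assms] by (simp add: fun_eq_iff)
  then show ?thesis
    by (auto simp: cycles_def chains_iff_chain_on)
qed

lemma boundaries_eq:
  assumes "X \<subseteq> Pow U" "finite U"
  shows "boundaries i X = bdry U ` {e. chain_on X (Suc (Suc i)) e}"
  unfolding boundaries_def
  using boundary_eq_bdry[OF _ assms] by (intro image_cong) (auto simp: chains_iff_chain_on)

lemma boundary_add: "boundary X (c + d) = boundary X c + boundary X d"
  by (simp add: fun_eq_iff boundary_def sum.distrib distrib_left)

lemma boundaries_add:
  assumes "x \<in> boundaries i X" "y \<in> boundaries i X"
  shows "x + y \<in> boundaries i X"
proof -
  obtain e f where "e \<in> chains (Suc i) X" "f \<in> chains (Suc i) X"
    and "x = boundary X e" "y = boundary X f"
    using assms unfolding boundaries_def by blast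
  moreover from this have "e + f \<in> chains (Suc i) X"
    by (simp add: chains_iff_chain_on chain_on_add)
  ultimately show ?thesis
    unfolding boundaries_def by (metis boundary_add image_eqI)
qed

lemma reduced_homology_isoI:
  fixes f g :: "(nat set \<Rightarrow> 'k::field) \<Rightarrow> nat set \<Rightarrow> 'k"
  assumes f_add: "\<And>c d. f (c + d) = f c + f d"
    and f_smult: "\<And>x c. f (\<lambda>F. x * c F) = (\<lambda>F. x * f c F)"
    and f_cycles: "\<And>c. c \<in> cycles i X \<Longrightarrow> f c \<in> cycles i Y"
    and g_cycles: "\<And>d. d \<in> cycles i Y \<Longrightarrow> g d \<in> cycles i X"
    and f_boundaries: "\<And>c. c \<in> boundaries i X \<Longrightarrow> f c \<in> boundaries i Y"
    and g_boundaries: "\<And>d. d \<in> boundaries i Y \<Longrightarrow> g d \<in> boundaries i X"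
    and gf: "\<And>c. c \<in> cycles i X \<Longrightarrow> c - g (f c) \<in> boundaries i X"
    and fg: "\<And>d. d \<in> cycles i Y \<Longrightarrow> d - f (g d) \<in> boundaries i Y"
  shows "reduced_homology_iso TYPE('k) i X Y"
proof -
  have "f (\<lambda>F. c F + d F) = (\<lambda>F. f c F + f d F)" for c d
    using f_add[of c d] by (simp add: plus_fun_def)
  moreover have "f c \<in> boundaries i Y \<longleftrightarrow> c \<in> boundaries i X" if "c \<in> cycles i X" for c
  proof
    assume "f c \<in> boundaries i Y"
    then have "(c - g (f c)) + g (f c) \<in> boundaries i X"
      using that by (intro boundaries_add gf g_boundaries)
    then show "c \<in> boundaries i X"
      by simp
  qed (rule f_boundaries)
  moreover have "\<exists>c\<in>cycles i X. (\<lambda>F. d F - f c F) \<in> boundaries i Y" if "d \<in> cycles i Y" for d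
    using that fg g_cycles by (intro bexI[of _ "g d"]) (auto simp: fun_diff_def)
  ultimately show ?thesis
    unfolding reduced_homology_iso_def using f_smult f_cycles by blast
qed

locale two_cones =
  fixes n :: nat and D1 D2 :: "nat set set" and B :: "nat set"
  assumes complex1: "simplicial_complex n D1" and complex2: "simplicial_complex n D2"
    and B_subset: "B \<subseteq> {1..n}"
begin

definition admissible :: "nat set \<Rightarrow> bool" where
  "admissible A \<longleftrightarrow> A \<subseteq> {1..n} \<and> A \<inter> B = {} \<and> A \<inter> vertex_set (D1 \<union> D2) = {}"

definition cones :: "nat set \<Rightarrow> nat set set" where
  "cones A = cone A D1 \<union> cone B D2"

definition shared_faces :: "nat set set" where
  "shared_faces = {G. G \<in> D1 \<or> G - B \<in> D2}"

lemma cones_eq: "cones A = {G. G - A \<in> D1 \<or> G - B \<in> D2}"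
  unfolding cones_def cone_eq[OF complex1] cone_eq[OF complex2] by auto

lemma cones_subset_Pow:
  assumes "admissible A"
  shows "cones A \<subseteq> Pow {1..n}"
proof
  fix G assume "G \<in> cones A"
  then have "G - A \<subseteq> {1..n} \<or> G - B \<subseteq> {1..n}"
    using complex1 complex2 unfolding cones_eq simplicial_complex_def by blast
  then show "G \<in> Pow {1..n}"
    using assms B_subset unfolding admissible_def by blast
qed

lemma shared_faces_disjoint: "admissible A \<Longrightarrow> G \<in> shared_faces \<Longrightarrow> G \<inter> A = {}"
  unfolding shared_faces_def admissible_def vertex_set_def by blast

lemma cones_avoiding_eq_shared_faces: "admissible A \<Longrightarrow> {G\<in>cones A. G \<inter> A = {}} = shared_faces"
  using shared_faces_disjoint[of A] unfolding cones_eq shared_faces_def by (auto simp: Diff_triv)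

lemma cones_meeting_subset: "admissible A \<Longrightarrow> {G\<in>cones A. G \<inter> A \<noteq> {}} \<subseteq> cone A D1"
  unfolding cones_eq cone_eq[OF complex1] admissible_def vertex_set_def by blast

lemma D1_subset_cone:
  assumes "admissible A"
  shows "D1 \<subseteq> cone A D1"
proof
  fix G assume "G \<in> D1"
  moreover from this have "G - A = G"
    using shared_faces_disjoint[OF assms, of G] by (auto simp: shared_faces_def)
  ultimately show "G \<in> cone A D1"
    by (simp add: cone_eq[OF complex1])
qed

lemma chain_on_avoid_cones:
  assumes "admissible A" "admissible A2" "chain_on (cones A) d c"
  shows "chain_on (cones A2) d (avoid A c)"
proof -
  have "chain_on shared_faces d (avoid A c)"
    using chain_on_avoid[OF assms(3), of A] cones_avoiding_eq_shared_faces[OF assms(1)] by simp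
  then show ?thesis
    by (rule chain_on_mono) (use cones_avoiding_eq_shared_faces[OF assms(2)] in blast)
qed

lemma chain_on_cone_chain_cones:
  assumes "admissible A" "a \<in> A" "chain_on D1 d u"
  shows "chain_on (cones A) (Suc d) (cone_chain a u)"
proof -
  have "chain_on (cone A D1) d u"
    using assms(3) D1_subset_cone[OF assms(1)] by (rule chain_on_mono)
  then have "chain_on (cone A D1) (Suc d) (cone_chain a u)"
    by (rule chain_on_cone_chain[OF complex1 assms(2)])
  then show ?thesis
    by (rule chain_on_mono) (simp add: cones_def)
qed

lemma chain_on_avoid_bdry_meeting_part:
  assumes "admissible A" "chain_on (cones A) (Suc d) c"
  shows "chain_on D1 d (avoid A (bdry U (c - avoid A c)))"
proof -
  have "chain_on (cone A D1) (Suc d) (c - avoid A c)"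
    using chain_on_diff_avoid[OF assms(2)] cones_meeting_subset[OF assms(1)] by (rule chain_on_mono)
  then show ?thesis
    by (rule chain_on_avoid_bdry[OF complex1])
qed

lemma chain_on_bdry_avoid_cycle:
  assumes "admissible A" "chain_on (cones A) (Suc d) c" "bdry U c = 0"
  shows "chain_on D1 d (bdry U (avoid A c))"
  using chain_on_uminus[OF chain_on_avoid_bdry_meeting_part[OF assms(1,2)]]
  by (simp add: bdry_avoid assms(3))

lemma cycles_cones:
  "admissible A \<Longrightarrow> cycles i (cones A) = {c. chain_on (cones A) (Suc i) c \<and> bdry {1..n} c = 0}"
  using cycles_eq[OF cones_subset_Pow] by blast

lemma boundaries_cones:
  "admissible A \<Longrightarrow> boundaries i (cones A) = bdry {1..n} ` {e. chain_on (cones A) (Suc (Suc i)) e}"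
  using boundaries_eq[OF cones_subset_Pow] by blast

lemma transfer_cycles:
  assumes A: "admissible A" and A2: "admissible A2" "a2 \<in> A2"
    and c: "c \<in> cycles i (cones A)"
  shows "transfer {1..n} a2 A c \<in> cycles i (cones A2)"
proof -
  have "chain_on (cones A) (Suc i) c" "bdry {1..n} c = 0"
    using c cycles_cones[OF A] by auto
  then have "chain_on (cones A2) (Suc i) (transfer {1..n} a2 A c)"
    unfolding transfer_def using A A2
    by (intro chain_on_diff chain_on_avoid_cones chain_on_cone_chain_cones chain_on_bdry_avoid_cycle)
  moreover have "a2 \<in> {1..n}"
    using A2 unfolding admissible_def by auto
  ultimately show ?thesis
    unfolding cycles_cones[OF A2(1)] by (simp add: bdry_transfer)
qed

lemma transfer_boundaries:
  assumes A: "admissible A" and A2: "admissible A2" "a2 \<in> A2"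
    and c: "c \<in> boundaries i (cones A)"
  shows "transfer {1..n} a2 A c \<in> boundaries i (cones A2)"
proof -
  obtain e where e: "chain_on (cones A) (Suc (Suc i)) e" and c_eq: "c = bdry {1..n} e"
    using c boundaries_cones[OF A] by auto
  define u where "u = avoid A (bdry {1..n} (e - avoid A e))"
  have u: "chain_on D1 (Suc i) u"
    unfolding u_def by (rule chain_on_avoid_bdry_meeting_part[OF A e])
  have "a2 \<in> {1..n}"
    using A2 unfolding admissible_def by auto
  have avoid_c: "avoid A c = bdry {1..n} (avoid A e) + u"
    by (simp add: c_eq bdry_avoid u_def)
  then have "bdry {1..n} (avoid A c) = bdry {1..n} u"
    by (simp add: bdry_add bdry_bdry)
  then have "transfer {1..n} a2 A c = bdry {1..n} (avoid A e) + (u - cone_chain a2 (bdry {1..n} u))"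
    by (simp add: transfer_def avoid_c)
  also have "u - cone_chain a2 (bdry {1..n} u) = bdry {1..n} (cone_chain a2 u)"
    using bdry_cone_chain[of "{1..n}" a2 u] \<open>a2 \<in> {1..n}\<close> by (simp add: diff_eq_eq)
  finally have "transfer {1..n} a2 A c = bdry {1..n} (avoid A e + cone_chain a2 u)"
    unfolding bdry_add .
  moreover have "chain_on (cones A2) (Suc (Suc i)) (avoid A e + cone_chain a2 u)"
    using A A2 e u by (intro chain_on_add chain_on_avoid_cones chain_on_cone_chain_cones)
  ultimately show ?thesis
    using boundaries_cones[OF A2(1)] by auto
qed

lemma transfer_transfer:
  assumes "admissible A" "admissible A2" "a2 \<in> A2" "chain_on (cones A) d c"
  shows "transfer U a A2 (transfer U a2 A c) = transfer U a A c"
proof -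
  have "avoid A2 (avoid A c) = avoid A c"
    using chain_on_avoid[OF assms(4), of A] shared_faces_disjoint[OF assms(2)]
    by (intro avoid_chain_on_disjoint) (auto simp: cones_avoiding_eq_shared_faces[OF assms(1)])
  then have "avoid A2 (transfer U a2 A c) = avoid A c"
    by (simp add: transfer_def avoid_diff avoid_cone_chain[OF assms(3)])
  then show ?thesis
    by (simp add: transfer_def)
qed

lemma cycle_minus_transfer:
  assumes A: "admissible A" "a \<in> A" and c: "c \<in> cycles i (cones A)"
  shows "c - transfer {1..n} a A c \<in> boundaries i (cones A)"
proof -
  define w where "w = c - transfer {1..n} a A c"
  have c': "chain_on (cones A) (Suc i) c" "bdry {1..n} c = 0"
    using c cycles_cones[OF A(1)] by auto
  have "a \<in> {1..n}"
    using A unfolding admissible_def by auto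
  have "w = (c - avoid A c) + cone_chain a (bdry {1..n} (avoid A c))"
    by (simp add: w_def transfer_def)
  moreover have "chain_on (cone A D1) (Suc i) (c - avoid A c)"
    using chain_on_diff_avoid[OF c'(1)] cones_meeting_subset[OF A(1)] by (rule chain_on_mono)
  moreover have "chain_on (cone A D1) (Suc i) (cone_chain a (bdry {1..n} (avoid A c)))"
    using A c' by (intro chain_on_cone_chain[OF complex1] chain_on_mono[OF _ D1_subset_cone]
        chain_on_bdry_avoid_cycle)
  ultimately have "chain_on (cone A D1) (Suc (Suc i)) (cone_chain a w)"
    using A by (intro chain_on_cone_chain[OF complex1]) (simp_all add: chain_on_add)
  then have "chain_on (cones A) (Suc (Suc i)) (cone_chain a w)"
    by (rule chain_on_mono) (simp add: cones_def)
  moreover have "bdry {1..n} w = 0"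
    using \<open>a \<in> {1..n}\<close> c' by (simp add: w_def bdry_diff bdry_transfer)
  then have "bdry {1..n} (cone_chain a w) = w"
    using bdry_cone_chain[of "{1..n}" a w] \<open>a \<in> {1..n}\<close> by simp
  ultimately show ?thesis
    using boundaries_cones[OF A(1)] unfolding w_def by (metis (mono_tags, lifting) image_eqI mem_Collect_eq)
qed

lemma cycle_minus_transfer_transfer:
  assumes "admissible A" "admissible A2" "a \<in> A" "a2 \<in> A2" "c \<in> cycles i (cones A)"
  shows "c - transfer {1..n} a A2 (transfer {1..n} a2 A c) \<in> boundaries i (cones A)"
proof -
  have "chain_on (cones A) (Suc i) c"
    using assms(5) cycles_cones[OF assms(1)] by auto
  then have "transfer {1..n} a A2 (transfer {1..n} a2 A c) = transfer {1..n} a A c"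
    by (rule transfer_transfer[OF assms(1,2,4)])
  then show ?thesis
    using cycle_minus_transfer[OF assms(1,3,5)] by simp
qed

end

theorem corollary3p3:
  fixes n i :: nat and \<Delta>1 \<Delta>2 :: "nat set set" and A A' B :: "nat set"
  assumes "simplicial_complex n \<Delta>1" and "simplicial_complex n \<Delta>2"
    and "A \<noteq> {}" and "A \<subseteq> {1..n}" and "A' \<noteq> {}" and "A' \<subseteq> {1..n}"
    and "B \<noteq> {}" and "B \<subseteq> {1..n}"
    and "A \<inter> B = {}" and "A' \<inter> B = {}"
    and "A \<inter> vertex_set (\<Delta>1 \<union> \<Delta>2) = {}" and "A' \<inter> vertex_set (\<Delta>1 \<union> \<Delta>2) = {}"
    and "i > 0"
  shows "reduced_homology_iso TYPE('k::field) i
           (cone A \<Delta>1 \<union> cone B \<Delta>2) (cone A' \<Delta>1 \<union> cone B \<Delta>2)"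
proof -
  \<comment> \<open>The argument works in every degree and does not need B \<noteq> {} either.\<close>
  interpret two_cones n \<Delta>1 \<Delta>2 B
    using assms by unfold_locales
  have admissible: "admissible A" "admissible A'"
    using assms by (simp_all add: admissible_def)
  obtain a a' where "a \<in> A" "a' \<in> A'"
    using assms(3,5) by blast
  show ?thesis
    unfolding cones_def[symmetric]
    by (rule reduced_homology_isoI[where f = "transfer {1..n} a' A" and g = "transfer {1..n} a A'"])
      (blast intro: transfer_add transfer_smult transfer_cycles transfer_boundaries
        cycle_minus_transfer_transfer admissible \<open>a \<in> A\<close> \<open>a' \<in> A'\<close>)+
qed

end
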